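(* Let $m\ge2$ be even and let $\mathcal{A},\mathcal{B}$ be real $m$-th order $n$-dimensional tensors ($n=n_1+\cdots+n_r$) that are sub-symmetric. Then there exists $(x,\lambda)$ with $x\neq0$, $x\in\mathcal{K}$, $(\lambda\mathcal{A}-\mathcal{B})x^{m-1}\in\mathcal{K}$ and $\langle x,(\lambda\mathcal{A}-\mathcal{B})x^{m-1}\rangle=0$ if and only if the problem $$\begin{array}{cl}\min & f(x,y,w,\lambda):=\|y-\lambda^{\frac1{m-1}}x\|^2+(x^\top w)^2\\ \text{s.t.} & w-\mathcal{A}y^{m-1}+\mathcal{B}x^{m-1}=0,\\ & (x^i_\circ)^2-\|x^i_\bullet\|^2\ge0,\ x^i_\circ\ge0,\ i=1,\ldots,r,\\ & (w^i_\circ)^2-\|w^i_\bullet\|^2\ge0,\ w^i_\circ\ge0,\ i=1,\ldots,r,\\ & e^\top x=1,\quad e^\top y=\lambda^{\frac1{m-1}},\end{array}$$ over $(x,y,w,\lambda)\in\mathbb{R}^n\times\mathbb{R}^n\times\mathbb{R}^n\times\mathbb{R}$ has a global minimizer at which the objective value is zero.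
   Context: A real $m$-th order $n$-dimensional tensor is $\mathcal{A}=(a_{i_1\ldots i_m})$; it is sub-symmetric if for each $i$ the $(m-1)$-th order tensor $(a_{ii_2\ldots i_m})_{i_2,\ldots,i_m}$ is symmetric (invariant under permutations of $i_2,\ldots,i_m$). $\mathcal{A}x^{m-1}\in\mathbb{R}^n$ has $i$-th component $\sum_{i_2,\ldots,i_m}a_{ii_2\ldots i_m}x_{i_2}\cdots x_{i_m}$. Vectors are written $x=(x^1,\ldots,x^r)\in\mathbb{R}^{n_1}\times\cdots\times\mathbb{R}^{n_r}$, $x^i=(x^i_\circ,x^i_\bullet)\in\mathbb{R}\times\mathbb{R}^{n_i-1}$ (similarly for $y,w$). $\mathcal{K}=\mathcal{K}^{n_1}\times\cdots\times\mathcal{K}^{n_r}$, $\mathcal{K}^{n_i}=\{x^i:x^i_\circ\ge\|x^i_\bullet\|\}$. $e=(e^1,\ldots,e^r)$, $e^i=(1,0,\ldots,0)^\top\in\mathbb{R}^{n_i}$. Since $m-1$ is odd, $\lambda^{1/(m-1)}$ denotes the real $(m-1)$-th root of $\lambda\in\mathbb{R}$. *)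

theory Defs
  imports "HOL-Analysis.Analysis" "HOL-Library.Multiset"
begin

text \<open>Vectors in R^n are functions nat => real; only indices < n matter.
  An m-th order n-dimensional tensor is a function on index lists of length m
  with entries < n.  Block structure: list ns = [n_1,...,n_r], n = sum_list ns.\<close>

definition index_lists :: "nat \<Rightarrow> nat \<Rightarrow> nat list set" where
  "index_lists n k = {is. set is \<subseteq> {..<n} \<and> length is = k}"

definition tensor_apply :: "nat \<Rightarrow> nat \<Rightarrow> (nat list \<Rightarrow> real) \<Rightarrow> (nat \<Rightarrow> real) \<Rightarrow> (nat \<Rightarrow> real)" where
  "tensor_apply n m A x = (\<lambda>i. \<Sum>is\<in>index_lists n (m - 1). A (i # is) * prod_list (map x is))"

definition sub_symmetric :: "nat \<Rightarrow> nat \<Rightarrow> (nat list \<Rightarrow> real) \<Rightarrow> bool" where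
  "sub_symmetric n m A \<longleftrightarrow>
     (\<forall>i<n. \<forall>is js. is \<in> index_lists n (m - 1) \<and> mset js = mset is \<longrightarrow> A (i # is) = A (i # js))"

definition inner_n :: "nat \<Rightarrow> (nat \<Rightarrow> real) \<Rightarrow> (nat \<Rightarrow> real) \<Rightarrow> real" where
  "inner_n n x y = (\<Sum>k<n. x k * y k)"

definition norm_n :: "nat \<Rightarrow> (nat \<Rightarrow> real) \<Rightarrow> real" where
  "norm_n n x = sqrt (\<Sum>k<n. (x k)\<^sup>2)"

definition nonzero_n :: "nat \<Rightarrow> (nat \<Rightarrow> real) \<Rightarrow> bool" where
  "nonzero_n n x \<longleftrightarrow> (\<exists>k<n. x k \<noteq> 0)"

definition blk_off :: "nat list \<Rightarrow> nat \<Rightarrow> nat" where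
  "blk_off ns i = sum_list (take i ns)"

definition blk_head :: "nat list \<Rightarrow> (nat \<Rightarrow> real) \<Rightarrow> nat \<Rightarrow> real" where
  "blk_head ns x i = x (blk_off ns i)"

definition blk_tail_norm :: "nat list \<Rightarrow> (nat \<Rightarrow> real) \<Rightarrow> nat \<Rightarrow> real" where
  "blk_tail_norm ns x i = sqrt (\<Sum>k\<in>{1..<ns ! i}. (x (blk_off ns i + k))\<^sup>2)"

definition in_K :: "nat list \<Rightarrow> (nat \<Rightarrow> real) \<Rightarrow> bool" where
  "in_K ns x \<longleftrightarrow> (\<forall>i<length ns. blk_head ns x i \<ge> blk_tail_norm ns x i)"

definition e_dot :: "nat list \<Rightarrow> (nat \<Rightarrow> real) \<Rightarrow> real" where
  "e_dot ns x = (\<Sum>i<length ns. blk_head ns x i)"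

text \<open>Objective f(x,y,w,lambda); root (m-1) is the real (odd) root.\<close>
definition obj :: "nat list \<Rightarrow> nat \<Rightarrow> (nat \<Rightarrow> real) \<Rightarrow> (nat \<Rightarrow> real) \<Rightarrow> (nat \<Rightarrow> real) \<Rightarrow> real \<Rightarrow> real" where
  "obj ns m x y w lam =
     (norm_n (sum_list ns) (\<lambda>k. y k - root (m - 1) lam * x k))\<^sup>2 + (inner_n (sum_list ns) x w)\<^sup>2"

definition feasible :: "nat list \<Rightarrow> nat \<Rightarrow> (nat list \<Rightarrow> real) \<Rightarrow> (nat list \<Rightarrow> real)
     \<Rightarrow> (nat \<Rightarrow> real) \<Rightarrow> (nat \<Rightarrow> real) \<Rightarrow> (nat \<Rightarrow> real) \<Rightarrow> real \<Rightarrow> bool" where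
  "feasible ns m A B x y w lam \<longleftrightarrow>
     (\<forall>k<sum_list ns. w k - tensor_apply (sum_list ns) m A y k + tensor_apply (sum_list ns) m B x k = 0) \<and>
     (\<forall>i<length ns. (blk_head ns x i)\<^sup>2 - (blk_tail_norm ns x i)\<^sup>2 \<ge> 0 \<and> blk_head ns x i \<ge> 0) \<and>
     (\<forall>i<length ns. (blk_head ns w i)\<^sup>2 - (blk_tail_norm ns w i)\<^sup>2 \<ge> 0 \<and> blk_head ns w i \<ge> 0) \<and>
     e_dot ns x = 1 \<and> e_dot ns y = root (m - 1) lam"

end

theory Submission imports Defs begin

text \<open>Since the objective is a sum of squares, a global minimiser with value zero is the same as a
  feasible point with value zero.  Such a point forces y = \<lambda>^{1/(m-1)} x, and then homogeneity of
  degree m - 1 turns the equality constraint into w = (\<lambda>A - B)x^{m-1}, so (x, \<lambda>) is a cone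
  eigenpair; x \<noteq> 0 because e^T x = 1.  Conversely, an eigenvector x in the cone has e^T x > 0,
  and after scaling x to e^T x = 1 the point (x, \<lambda>^{1/(m-1)} x, (\<lambda>A - B)x^{m-1}, \<lambda>) is feasible
  with value zero.  Because m - 1 is odd, the real root satisfies (\<lambda>^{1/(m-1)})^{m-1} = \<lambda> for
  every real \<lambda>, with no sign condition.\<close>

lemma blk_off_add_less_sum_list:
  assumes "i < length ns" "k < ns ! i"
  shows "blk_off ns i + k < sum_list ns"
proof -
  have "sum_list ns = sum_list (take i ns) + ns ! i + sum_list (drop (Suc i) ns)"
    using assms(1) by (metis add.assoc id_take_nth_drop sum_list.Cons sum_list_append)
  thus ?thesis using assms(2) unfolding blk_off_def by linarith
qed

lemma blk_head_index_less_sum_list: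
  assumes "\<forall>k\<in>set ns. k \<ge> 1" "i < length ns"
  shows "blk_off ns i < sum_list ns"
  using blk_off_add_less_sum_list[OF assms(2), of 0] assms(1) nth_mem[OF assms(2)] by fastforce

lemma in_some_block:
  "k < sum_list ns \<Longrightarrow> \<exists>i<length ns. \<exists>j<ns ! i. k = blk_off ns i + j"
proof (induction ns arbitrary: k)
  case Nil thus ?case by simp
next
  case (Cons a ns)
  show ?case
  proof (cases "k < a")
    case True thus ?thesis by (intro exI[of _ 0]) (auto simp: blk_off_def)
  next
    case False
    then have "k - a < sum_list ns" using Cons.prems by simp
    then obtain i j where "i < length ns" "j < ns ! i" "k - a = blk_off ns i + j"
      using Cons.IH by blast
    thus ?thesis using False by (intro exI[of _ "Suc i"]) (auto simp: blk_off_def)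
  qed
qed

lemma prod_list_map_scale:
  "prod_list (map (\<lambda>k. (c::real) * f k) xs) = c ^ length xs * prod_list (map f xs)"
  by (induction xs) (simp_all add: ac_simps)

lemma tensor_apply_scale:
  "tensor_apply n m A (\<lambda>k. c * x k) i = c ^ (m - 1) * tensor_apply n m A x i"
  unfolding tensor_apply_def prod_list_map_scale sum_distrib_left
  by (rule sum.cong) (auto simp: index_lists_def)

lemma tensor_apply_cong:
  assumes "\<forall>k<n. x k = x' k"
  shows "tensor_apply n m A x = tensor_apply n m A x'"
  unfolding tensor_apply_def
proof (rule ext, rule sum.cong)
  fix i "is" assume "is \<in> index_lists n (m - 1)"
  then have "map x is = map x' is" using assms by (intro map_cong) (auto simp: index_lists_def)
  thus "A (i # is) * prod_list (map x is) = A (i # is) * prod_list (map x' is)" by (simp only:)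
qed simp

lemma tensor_apply_pencil:
  "tensor_apply n m (\<lambda>is. lam * A is - B is) x i = lam * tensor_apply n m A x i - tensor_apply n m B x i"
  unfolding tensor_apply_def by (simp add: sum_distrib_left sum_subtractf algebra_simps)

lemma blk_head_scale: "blk_head ns (\<lambda>k. c * x k) i = c * blk_head ns x i"
  by (simp add: blk_head_def)

lemma blk_tail_norm_scale: "blk_tail_norm ns (\<lambda>k. c * x k) i = \<bar>c\<bar> * blk_tail_norm ns x i"
proof -
  have "(\<Sum>k\<in>{1..<ns ! i}. (c * x (blk_off ns i + k))\<^sup>2) = c\<^sup>2 * (\<Sum>k\<in>{1..<ns ! i}. (x (blk_off ns i + k))\<^sup>2)"
    by (simp add: sum_distrib_left power_mult_distrib)
  thus ?thesis unfolding blk_tail_norm_def by (simp add: real_sqrt_mult)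
qed

lemma blk_tail_norm_nonneg: "blk_tail_norm ns x i \<ge> 0"
  unfolding blk_tail_norm_def by (auto intro: sum_nonneg)

lemma in_K_scale: "c \<ge> 0 \<Longrightarrow> in_K ns x \<Longrightarrow> in_K ns (\<lambda>k. c * x k)"
  unfolding in_K_def blk_head_scale blk_tail_norm_scale by (auto intro: mult_left_mono)

lemma e_dot_scale: "e_dot ns (\<lambda>k. c * x k) = c * e_dot ns x"
  unfolding e_dot_def blk_head_scale by (simp add: sum_distrib_left)

lemma in_K_cong:
  assumes "\<forall>k\<in>set ns. k \<ge> 1" "\<forall>k<sum_list ns. x k = x' k"
  shows "in_K ns x = in_K ns x'"
proof -
  have "blk_head ns x i = blk_head ns x' i \<and> blk_tail_norm ns x i = blk_tail_norm ns x' i"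
    if "i < length ns" for i
    using assms blk_head_index_less_sum_list[OF assms(1) that] blk_off_add_less_sum_list[OF that]
    unfolding blk_head_def blk_tail_norm_def by (auto intro!: arg_cong[where f=sqrt] sum.cong)
  thus ?thesis unfolding in_K_def by auto
qed

lemma in_K_iff_squares:
  "in_K ns x \<longleftrightarrow>
     (\<forall>i<length ns. (blk_head ns x i)\<^sup>2 - (blk_tail_norm ns x i)\<^sup>2 \<ge> 0 \<and> blk_head ns x i \<ge> 0)"
proof -
  have "blk_head ns x i \<ge> blk_tail_norm ns x i \<longleftrightarrow>
        (blk_head ns x i)\<^sup>2 - (blk_tail_norm ns x i)\<^sup>2 \<ge> 0 \<and> blk_head ns x i \<ge> 0" for i
    using blk_tail_norm_nonneg[of ns x i] by (smt (verit) power2_le_imp_le power_mono)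
  thus ?thesis unfolding in_K_def by blast
qed

lemma feasible_iff:
  "feasible ns m A B x y w lam \<longleftrightarrow>
     (\<forall>k<sum_list ns. w k = tensor_apply (sum_list ns) m A y k - tensor_apply (sum_list ns) m B x k) \<and>
     in_K ns x \<and> in_K ns w \<and> e_dot ns x = 1 \<and> e_dot ns y = root (m - 1) lam"
proof -
  have "w k - a + b = 0 \<longleftrightarrow> w k = a - b" for k and a b :: real by linarith
  then show ?thesis unfolding feasible_def in_K_iff_squares by (simp only:)
qed

lemma obj_nonneg: "obj ns m x y w lam \<ge> 0"
  unfolding obj_def by simp

lemma obj_eq_0_iff:
  "obj ns m x y w lam = 0 \<longleftrightarrow>
     (\<forall>k<sum_list ns. y k = root (m - 1) lam * x k) \<and> inner_n (sum_list ns) x w = 0"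
proof -
  let ?d = "\<lambda>k. y k - root (m - 1) lam * x k"
  have sq_nonneg: "(\<Sum>k<sum_list ns. (?d k)\<^sup>2) \<ge> 0" by (simp add: sum_nonneg)
  then have "obj ns m x y w lam = (\<Sum>k<sum_list ns. (?d k)\<^sup>2) + (inner_n (sum_list ns) x w)\<^sup>2"
    unfolding obj_def norm_n_def by simp
  moreover have "(\<Sum>k<sum_list ns. (?d k)\<^sup>2) = 0 \<longleftrightarrow> (\<forall>k<sum_list ns. ?d k = 0)"
    using sum_nonneg_eq_0_iff[of "{..<sum_list ns}" "\<lambda>k. (?d k)\<^sup>2"] by auto
  ultimately show ?thesis using sq_nonneg by (simp add: add_nonneg_eq_0_iff)
qed

lemma e_dot_pos:
  assumes "\<forall>k\<in>set ns. k \<ge> 1" "in_K ns x" "nonzero_n (sum_list ns) x"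
  shows "e_dot ns x > 0"
proof (rule ccontr)
  assume "\<not> e_dot ns x > 0"
  have heads_nonneg: "\<forall>i\<in>{..<length ns}. blk_head ns x i \<ge> 0"
    using assms(2) blk_tail_norm_nonneg unfolding in_K_def by (meson lessThan_iff order_trans)
  then have "e_dot ns x \<ge> 0" unfolding e_dot_def by (intro sum_nonneg) auto
  then have "e_dot ns x = 0" using \<open>\<not> e_dot ns x > 0\<close> by simp
  then have heads_0: "\<forall>i<length ns. blk_head ns x i = 0"
    using sum_nonneg_eq_0_iff[of "{..<length ns}" "blk_head ns x"] heads_nonneg
    unfolding e_dot_def by auto
  then have tails_0: "\<forall>i<length ns. blk_tail_norm ns x i = 0"
    using assms(2) blk_tail_norm_nonneg unfolding in_K_def by (metis order_antisym)
  obtain k where k: "k < sum_list ns" "x k \<noteq> 0" using assms(3) unfolding nonzero_n_def by blast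
  obtain i j where ij: "i < length ns" "j < ns ! i" "k = blk_off ns i + j"
    using in_some_block[OF k(1)] by blast
  show False
  proof (cases "j = 0")
    case True thus False using heads_0 ij k unfolding blk_head_def by auto
  next
    case False
    have "(\<Sum>k\<in>{1..<ns ! i}. (x (blk_off ns i + k))\<^sup>2) = 0"
      using tails_0 ij(1) unfolding blk_tail_norm_def by simp
    then have "(x (blk_off ns i + j))\<^sup>2 = 0"
      using False ij(2) by (simp add: sum_nonneg_eq_0_iff)
    thus False using k ij by simp
  qed
qed

lemma nonzero_if_e_dot_nonzero:
  assumes "\<forall>k\<in>set ns. k \<ge> 1" "e_dot ns x \<noteq> 0"
  shows "nonzero_n (sum_list ns) x"
proof -
  have "\<not> (\<forall>i<length ns. x (blk_off ns i) = 0)"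
    using assms(2) unfolding e_dot_def blk_head_def by (metis lessThan_iff sum.neutral)
  then obtain i where "i < length ns" "x (blk_off ns i) \<noteq> 0" by blast
  thus ?thesis
    using blk_head_index_less_sum_list[OF assms(1)] unfolding nonzero_n_def by blast
qed

lemma zero_feasible_point_of_eigenpair:
  fixes ns :: "nat list" and n :: nat defines "n \<equiv> sum_list ns"
  assumes "odd (m - 1)" "\<forall>k\<in>set ns. k \<ge> 1"
    and "nonzero_n n x" "in_K ns x" "in_K ns (tensor_apply n m (\<lambda>is. lam * A is - B is) x)"
    and "inner_n n x (tensor_apply n m (\<lambda>is. lam * A is - B is) x) = 0"
  shows "\<exists>x y w. feasible ns m A B x y w lam \<and> obj ns m x y w lam = 0"
proof -
  define T where "T = tensor_apply n m (\<lambda>is. lam * A is - B is) x"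
  define t where "t = e_dot ns x"
  define r where "r = root (m - 1) lam"
  define c where "c = (1 / t) ^ (m - 1)"
  define x' where "x' = (\<lambda>k. (1 / t) * x k)"
  define y where "y = (\<lambda>k. r * x' k)"
  define w where "w = (\<lambda>k. c * T k)"
  have t_pos: "t > 0" unfolding t_def n_def using e_dot_pos assms by simp
  have r_pow: "r ^ (m - 1) = lam" unfolding r_def using odd_real_root_pow[OF assms(2)] .
  have w_eq: "w k = tensor_apply n m A y k - tensor_apply n m B x' k" for k
  proof -
    have "y = (\<lambda>k. (r / t) * x k)" by (simp add: y_def x'_def)
    then have "tensor_apply n m A y k = (r / t) ^ (m - 1) * tensor_apply n m A x k"
      by (simp only: tensor_apply_scale)
    also have "\<dots> = lam * c * tensor_apply n m A x k"
      unfolding c_def power_divide r_pow by (simp add: power_one_over)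
    finally have "tensor_apply n m A y k = lam * c * tensor_apply n m A x k" .
    moreover have "tensor_apply n m B x' k = c * tensor_apply n m B x k"
      unfolding x'_def c_def by (rule tensor_apply_scale)
    ultimately show ?thesis
      unfolding w_def T_def tensor_apply_pencil by (simp add: algebra_simps)
  qed
  have "in_K ns x'" unfolding x'_def using in_K_scale[OF _ assms(5), of "1 / t"] t_pos by simp
  moreover have "in_K ns w"
    unfolding w_def T_def using in_K_scale[OF _ assms(6), of c] t_pos by (simp add: c_def)
  moreover have e_x': "e_dot ns x' = 1"
    unfolding x'_def e_dot_scale t_def[symmetric] using t_pos by simp
  moreover have "e_dot ns y = r" unfolding y_def e_dot_scale e_x' by simp
  ultimately have "feasible ns m A B x' y w lam"
    unfolding feasible_iff n_def[symmetric] r_def[symmetric] using w_eq by blast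
  moreover have "inner_n n x' w = (1 / t) * c * inner_n n x T"
    unfolding inner_n_def x'_def w_def by (simp add: sum_distrib_left algebra_simps)
  then have "obj ns m x' y w lam = 0"
    using assms(7) unfolding obj_eq_0_iff n_def[symmetric] by (simp add: y_def r_def T_def)
  ultimately show ?thesis by blast
qed

lemma eigenpair_of_zero_feasible_point:
  fixes ns :: "nat list" and n :: nat defines "n \<equiv> sum_list ns"
  assumes "odd (m - 1)" "\<forall>k\<in>set ns. k \<ge> 1"
    and "feasible ns m A B x y w lam" "obj ns m x y w lam = 0"
  shows "nonzero_n n x \<and> in_K ns x \<and> in_K ns (tensor_apply n m (\<lambda>is. lam * A is - B is) x) \<and>
         inner_n n x (tensor_apply n m (\<lambda>is. lam * A is - B is) x) = 0"
proof -
  let ?T = "tensor_apply n m (\<lambda>is. lam * A is - B is) x"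
  have y_eq: "\<forall>k<n. y k = root (m - 1) lam * x k" and inner_0: "inner_n n x w = 0"
    using assms(5) unfolding obj_eq_0_iff n_def by auto
  have "tensor_apply n m A y = tensor_apply n m A (\<lambda>k. root (m - 1) lam * x k)"
    using y_eq by (rule tensor_apply_cong)
  then have "tensor_apply n m A y k = lam * tensor_apply n m A x k" for k
    using tensor_apply_scale[of n m A "root (m - 1) lam" x k]
    unfolding odd_real_root_pow[OF assms(2)] by simp
  then have w_eq: "\<forall>k<n. w k = ?T k"
    using assms(4) unfolding feasible_iff tensor_apply_pencil n_def by auto
  have "in_K ns ?T"
    using assms(4) in_K_cong[OF assms(3), of w ?T] w_eq unfolding feasible_iff n_def by auto
  moreover have "inner_n n x ?T = 0"
    using inner_0 w_eq unfolding inner_n_def by simp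
  moreover have "nonzero_n n x"
    using assms(3,4) nonzero_if_e_dot_nonzero unfolding feasible_iff n_def by simp
  ultimately show ?thesis using assms(4) unfolding feasible_iff by simp
qed

theorem theorem4:
  fixes ns :: "nat list" and m :: nat and A B :: "nat list \<Rightarrow> real"
  assumes "m \<ge> 2" and "even m"
    and "\<forall>k\<in>set ns. k \<ge> 1"
    and "sub_symmetric (sum_list ns) m A" and "sub_symmetric (sum_list ns) m B"
  shows "(\<exists>x lam. nonzero_n (sum_list ns) x \<and> in_K ns x \<and>
            in_K ns (tensor_apply (sum_list ns) m (\<lambda>is. lam * A is - B is) x) \<and>
            inner_n (sum_list ns) x (tensor_apply (sum_list ns) m (\<lambda>is. lam * A is - B is) x) = 0)
     \<longleftrightarrow>
         (\<exists>x y w lam. feasible ns m A B x y w lam \<and>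
            (\<forall>x' y' w' lam'. feasible ns m A B x' y' w' lam' \<longrightarrow> obj ns m x y w lam \<le> obj ns m x' y' w' lam') \<and>
            obj ns m x y w lam = 0)"
proof -
  have odd: "odd (m - 1)" using assms(1,2) by simp
  show ?thesis
  proof
    assume "\<exists>x lam. nonzero_n (sum_list ns) x \<and> in_K ns x \<and>
            in_K ns (tensor_apply (sum_list ns) m (\<lambda>is. lam * A is - B is) x) \<and>
            inner_n (sum_list ns) x (tensor_apply (sum_list ns) m (\<lambda>is. lam * A is - B is) x) = 0"
    then obtain x y w lam where "feasible ns m A B x y w lam" "obj ns m x y w lam = 0"
      using zero_feasible_point_of_eigenpair[OF odd assms(3)] by blast
    then show "\<exists>x y w lam. feasible ns m A B x y w lam \<and>
            (\<forall>x' y' w' lam'. feasible ns m A B x' y' w' lam' \<longrightarrow> obj ns m x y w lam \<le> obj ns m x' y' w' lam') \<and>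
            obj ns m x y w lam = 0"
      using obj_nonneg by metis
  qed (use eigenpair_of_zero_feasible_point[OF odd assms(3)] in blast)
qed

end
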